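(* Let $r \in \mathbb{Z}_{\geqslant 1}$. For any real $x \geqslant 1$, $$\sum_{m \leqslant x} 2^{\omega(m)} \sum_{\substack{n \leqslant x/m \\ (m, \gamma(n)) = 1}} r^{\omega(n)} = \sum_{m \leqslant x} (r+2)^{\omega(m)}.$$
   Context: $\omega(n)$ is the number of distinct prime factors of $n$ and $\gamma(n) := \prod_{p \mid n} p$ is the squarefree kernel of $n$ (with $\gamma(1)=1$). Sums run over positive integers. *)

theory Defs
  imports "HOL-Computational_Algebra.Primes" Complex_Main
begin

definition omega :: "nat \<Rightarrow> nat" where
  "omega n = card (prime_factors n)"

definition gamma :: "nat \<Rightarrow> nat" where
  "gamma n = (\<Prod>p\<in>prime_factors n. p)"

end

theory Submission
  imports Defs
begin

(* Since gamma n has the same prime factors as n, the condition (m, gamma n) = 1 is just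
   (m, n) = 1. Grouping the coprime pairs (m, n) by N = m n turns the left-hand side into
   the sum over N <= x of 2^omega(d) r^omega(N/d) over the unitary divisors d of N, those
   with (d, N/d) = 1. A unitary divisor is determined by its set S of prime factors, and
   every subset S of the prime factors of N occurs, so the inner sum is the binomial sum
   of 2^|S| r^(omega N - |S|) over all S, which is (r + 2)^omega(N). *)

lemma coprime_iff_prime_factors_disjoint:
  fixes a b :: nat
  assumes "a \<noteq> 0" "b \<noteq> 0"
  shows "coprime a b \<longleftrightarrow> prime_factors a \<inter> prime_factors b = {}"
proof -
  have "coprime a b \<longleftrightarrow> prime_factorization (gcd a b) = {#}"
    using assms by (simp add: prime_factorization_empty_iff coprime_iff_gcd_eq_1)
  also have "\<dots> \<longleftrightarrow> prime_factors (gcd a b) = {}"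
    by simp
  finally show ?thesis
    using assms by simp
qed

lemma prime_factors_prime_power:
  "prime p \<Longrightarrow> k > 0 \<Longrightarrow> prime_factors (p ^ k) = {p}"
  by (simp add: prime_factorization_prime_power)

lemma prime_factors_gamma [simp]: "prime_factors (gamma n) = prime_factors n"
proof -
  have "prime_factors (gamma n) = (\<Union>p\<in>prime_factors n. prime_factors p)"
    unfolding gamma_def by (subst prime_factors_prod) (simp_all add: comp_def)
  also have "\<dots> = (\<Union>p\<in>prime_factors n. {p})"
    by (intro SUP_cong refl prime_prime_factors) auto
  also have "\<dots> = prime_factors n"
    by simp
  finally show ?thesis .
qed

lemma gamma_pos: "gamma n > 0"
  unfolding gamma_def by (auto intro: prime_gt_0_nat)

lemma coprime_gamma_right_iff:
  fixes m n :: nat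
  assumes "m \<noteq> 0" "n \<noteq> 0"
  shows "coprime m (gamma n) \<longleftrightarrow> coprime m n"
  using assms gamma_pos[of n] by (simp add: coprime_iff_prime_factors_disjoint)

definition unitary_divisors :: "nat \<Rightarrow> nat set" where
  "unitary_divisors N = {d. d dvd N \<and> coprime d (N div d)}"

lemma finite_unitary_divisors: "N > 0 \<Longrightarrow> finite (unitary_divisors N)"
  unfolding unitary_divisors_def by (auto intro: finite_subset[OF _ finite_divisors_nat])

lemma prime_factors_unitary_cofactor:
  assumes "N > 0" "d \<in> unitary_divisors N"
  shows "prime_factors (N div d) = prime_factors N - prime_factors d"
proof -
  have d: "d dvd N" "coprime d (N div d)"
    using assms(2) by (auto simp: unitary_divisors_def)
  have nz: "d \<noteq> 0" "N div d \<noteq> 0"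
    using d(1) assms(1) by auto
  have "prime_factors N = prime_factors d \<union> prime_factors (N div d)"
    using prime_factors_product[OF nz] d(1) by simp
  moreover have "prime_factors d \<inter> prime_factors (N div d) = {}"
    using d(2) nz by (simp add: coprime_iff_prime_factors_disjoint)
  ultimately show ?thesis by blast
qed

lemma prod_prime_factors_unitary_divisor:
  assumes "N > 0" "d \<in> unitary_divisors N"
  shows "(\<Prod>p\<in>prime_factors d. p ^ multiplicity p N) = d"
proof -
  have d: "d dvd N" and nz: "d \<noteq> 0" "N div d \<noteq> 0"
    using assms by (auto simp: unitary_divisors_def)
  have "multiplicity p N = multiplicity p d" if p: "p \<in> prime_factors d" for p
  proof -
    have "p \<notin> prime_factors (N div d)"
      using p prime_factors_unitary_cofactor[OF assms] by blast
    then have "multiplicity p (N div d) = 0"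
      using p nz(2) by (auto simp: in_prime_factors_iff not_dvd_imp_multiplicity_0)
    moreover have "multiplicity p N = multiplicity p d + multiplicity p (N div d)"
      using prime_elem_multiplicity_mult_distrib[OF _ nz, of p] p d by auto
    ultimately show ?thesis by simp
  qed
  then have "(\<Prod>p\<in>prime_factors d. p ^ multiplicity p N) = (\<Prod>p\<in>prime_factors d. p ^ multiplicity p d)"
    by (intro prod.cong) simp_all
  also have "\<dots> = d"
    using nz(1) by (simp add: prime_factorization_nat[symmetric])
  finally show ?thesis .
qed

lemma prime_factors_prod_prime_powers:
  assumes "N > 0" "S \<subseteq> prime_factors N"
  shows "prime_factors (\<Prod>p\<in>S. p ^ multiplicity p N) = S"
proof -
  have "finite S"
    using assms(2) finite_subset by blast
  then have "prime_factors (\<Prod>p\<in>S. p ^ multiplicity p N) = (\<Union>p\<in>S. prime_factors (p ^ multiplicity p N))"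
    using assms(2) by (subst prime_factors_prod) (auto simp: comp_def)
  also have "\<dots> = (\<Union>p\<in>S. {p})"
    using assms by (intro SUP_cong refl prime_factors_prime_power) (auto simp: prime_factors_multiplicity)
  finally show ?thesis by simp
qed

lemma prod_prime_powers_in_unitary_divisors:
  assumes "N > 0" "S \<subseteq> prime_factors N"
  shows "(\<Prod>p\<in>S. p ^ multiplicity p N) \<in> unitary_divisors N"
proof -
  define d e where "d = (\<Prod>p\<in>S. p ^ multiplicity p N)"
    and "e = (\<Prod>p\<in>prime_factors N - S. p ^ multiplicity p N)"
  have "N = (\<Prod>p\<in>prime_factors N. p ^ multiplicity p N)"
    by (rule prime_factorization_nat[OF assms(1)])
  also have "\<dots> = e * d"
    unfolding d_def e_def using assms(2) by (intro prod.subset_diff) auto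
  finally have N: "N = e * d" .
  then have nz: "d \<noteq> 0" "e \<noteq> 0"
    using assms(1) by auto
  have "prime_factors d \<inter> prime_factors e = {}"
    using assms unfolding d_def e_def by (simp add: prime_factors_prod_prime_powers)
  then have "coprime d e"
    using nz by (simp add: coprime_iff_prime_factors_disjoint)
  moreover have "d dvd N" "N div d = e"
    using N nz by simp_all
  ultimately show ?thesis
    unfolding d_def[symmetric] unitary_divisors_def by simp
qed

lemma bij_betw_prime_factors_unitary_divisors:
  assumes "N > 0"
  shows "bij_betw prime_factors (unitary_divisors N) (Pow (prime_factors N))"
proof (rule bij_betw_byWitness[where f' = "\<lambda>S. \<Prod>p\<in>S. p ^ multiplicity p N"])
  show "\<forall>d\<in>unitary_divisors N. (\<Prod>p\<in>prime_factors d. p ^ multiplicity p N) = d"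
    using prod_prime_factors_unitary_divisor[OF assms] by simp
  show "\<forall>S\<in>Pow (prime_factors N). prime_factors (\<Prod>p\<in>S. p ^ multiplicity p N) = S"
    using prime_factors_prod_prime_powers[OF assms] by simp
  show "prime_factors ` unitary_divisors N \<subseteq> Pow (prime_factors N)"
    using assms by (intro image_subsetI PowI dvd_prime_factors) (auto simp: unitary_divisors_def)
  show "(\<lambda>S. \<Prod>p\<in>S. p ^ multiplicity p N) ` Pow (prime_factors N) \<subseteq> unitary_divisors N"
    by (intro image_subsetI prod_prime_powers_in_unitary_divisors[OF assms]) simp
qed

lemma sum_unitary_divisors_power_omega:
  fixes a b :: "'a :: comm_semiring_1"
  assumes "N > 0"
  shows "(\<Sum>d\<in>unitary_divisors N. a ^ omega d * b ^ omega (N div d)) = (a + b) ^ omega N"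
proof -
  have "(\<Sum>d\<in>unitary_divisors N. a ^ omega d * b ^ omega (N div d))
      = (\<Sum>d\<in>unitary_divisors N. a ^ card (prime_factors d) * b ^ card (prime_factors N - prime_factors d))"
    using prime_factors_unitary_cofactor[OF assms] by (simp add: omega_def)
  also have "\<dots> = (\<Sum>S\<in>Pow (prime_factors N). a ^ card S * b ^ card (prime_factors N - S))"
    using sum.reindex_bij_betw[OF bij_betw_prime_factors_unitary_divisors[OF assms]] by simp
  also have "\<dots> = (\<Prod>p\<in>prime_factors N. a + b)"
    by (subst prod_add) simp_all
  finally show ?thesis
    by (simp add: omega_def)
qed

lemma finite_nat_real_le: "finite {n::nat. real n \<le> y}"
proof (rule finite_subset)
  show "{n::nat. real n \<le> y} \<subseteq> {..nat \<lfloor>y\<rfloor>}"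
    by (auto simp: le_nat_floor)
qed simp

lemma sum_coprime_pairs_eq_sum_unitary_divisors:
  fixes f :: "nat \<Rightarrow> nat \<Rightarrow> 'a :: comm_monoid_add" and x :: real
  defines "A \<equiv> {m::nat. 1 \<le> m \<and> real m \<le> x}"
  shows "(\<Sum>m\<in>A. \<Sum>n\<in>{n. 1 \<le> n \<and> real n \<le> x / real m \<and> coprime m n}. f m n)
       = (\<Sum>N\<in>A. \<Sum>d\<in>unitary_divisors N. f d (N div d))"
proof -
  define B where "B m = {n. 1 \<le> n \<and> real n \<le> x / real m \<and> coprime m n}" for m
  have bound_iff: "real n \<le> x / real m \<longleftrightarrow> real (m * n) \<le> x" if "m \<ge> 1" for m n
    using that by (simp add: field_simps)
  have finite: "finite A" "finite (B m)" for m
    unfolding A_def B_def by (simp_all add: finite_nat_real_le)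
  have "(\<Sum>m\<in>A. \<Sum>n\<in>B m. f m n) = (\<Sum>(m, n)\<in>Sigma A B. f m n)"
    using finite by (intro sum.Sigma) auto
  also have "\<dots> = (\<Sum>(N, d)\<in>Sigma A unitary_divisors. f d (N div d))"
  proof (rule sum.reindex_bij_witness[where i = "\<lambda>(N, d). (d, N div d)" and j = "\<lambda>(m, n). (m * n, m)"])
    fix mn assume "mn \<in> Sigma A B"
    then obtain m n where mn: "mn = (m, n)" "1 \<le> m" "1 \<le> n" "real (m * n) \<le> x" "coprime m n"
      unfolding A_def B_def using bound_iff by auto
    moreover have "real m \<le> real (m * n)"
      using mn(3) by (simp only: of_nat_le_iff) simp
    ultimately show "(case mn of (m, n) \<Rightarrow> (m * n, m)) \<in> Sigma A unitary_divisors"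
      and "(case case mn of (m, n) \<Rightarrow> (m * n, m) of (N, d) \<Rightarrow> (d, N div d)) = mn"
      unfolding A_def unitary_divisors_def by auto
  next
    fix Nd assume "Nd \<in> Sigma A unitary_divisors"
    then obtain N d where Nd: "Nd = (N, d)" "1 \<le> N" "real N \<le> x" "d dvd N" "coprime d (N div d)"
      unfolding A_def unitary_divisors_def by auto
    then have d: "d * (N div d) = N" "1 \<le> d" "1 \<le> N div d" "d \<le> N"
      by (auto intro: dvd_imp_le simp: Suc_le_eq dvd_div_eq_0_iff)
    have "real d \<le> x"
      using d(4) Nd(3) of_nat_le_iff[of d N] by linarith
    then have "d \<in> A"
      using d(2) by (simp add: A_def)
    have "real (N div d) \<le> x / real d"
      using bound_iff[of d "N div d"] d(1,2) Nd(3) by simp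
    then have "N div d \<in> B d"
      using d(3) Nd(5) by (simp add: B_def)
    with \<open>d \<in> A\<close> show "(case Nd of (N, d) \<Rightarrow> (d, N div d)) \<in> Sigma A B"
      using Nd(1) by simp
    show "(case case Nd of (N, d) \<Rightarrow> (d, N div d) of (m, n) \<Rightarrow> (m * n, m)) = Nd"
      using Nd(1) d(1) by simp
  qed (auto simp: A_def)
  also have "\<dots> = (\<Sum>N\<in>A. \<Sum>d\<in>unitary_divisors N. f d (N div d))"
    using finite(1) finite_unitary_divisors by (intro sum.Sigma[symmetric]) (auto simp: A_def)
  finally show ?thesis
    unfolding B_def .
qed

theorem lemma4p3:
  fixes r :: nat and x :: real
  assumes "r \<ge> 1" and "x \<ge> 1"
  shows "(\<Sum>m\<in>{m::nat. 1 \<le> m \<and> real m \<le> x}.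
            2 ^ omega m * (\<Sum>n\<in>{n::nat. 1 \<le> n \<and> real n \<le> x / real m \<and> coprime m (gamma n)}.
                             r ^ omega n))
         = (\<Sum>m\<in>{m::nat. 1 \<le> m \<and> real m \<le> x}. (r + 2) ^ omega m)"
proof -
  \<comment> \<open>The identity holds for all r and x.\<close>
  define A where "A = {m::nat. 1 \<le> m \<and> real m \<le> x}"
  have "(\<Sum>m\<in>A. 2 ^ omega m * (\<Sum>n\<in>{n. 1 \<le> n \<and> real n \<le> x / real m \<and> coprime m (gamma n)}. r ^ omega n))
      = (\<Sum>m\<in>A. \<Sum>n\<in>{n. 1 \<le> n \<and> real n \<le> x / real m \<and> coprime m n}. 2 ^ omega m * r ^ omega n)"
    unfolding A_def sum_distrib_left by (intro sum.cong Collect_cong) (auto simp: coprime_gamma_right_iff)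
  also have "\<dots> = (\<Sum>N\<in>A. \<Sum>d\<in>unitary_divisors N. 2 ^ omega d * r ^ omega (N div d))"
    unfolding A_def by (rule sum_coprime_pairs_eq_sum_unitary_divisors)
  also have "\<dots> = (\<Sum>N\<in>A. (r + 2) ^ omega N)"
    unfolding A_def by (intro sum.cong refl) (simp add: sum_unitary_divisors_power_omega add.commute)
  finally show ?thesis
    unfolding A_def .
qed

end
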